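(* Let $\lambda_{\operatorname{gr}}\ge0$ and let $X=(V,E,T)$ be an $(s,k,K)$-two layer system whose ground graph is a $\lambda_{\operatorname{gr}}$-expander. Let $A\subseteq E$ be non-empty, $0<\mu<1$, and $U\subseteq V$ a set of vertices that are $\mu$-large with respect to $A$. For $0\le i\le k$ let $A^i_U=\{\tau\in A:|\tau\cap U|=i\}$. If $\frac{w(A)}{w(E)}\le\frac{4\mu^2}{s^3(s-1)^2}$, then $$\frac{s(s-1)(k-1)}{2\mu}\lambda_{\operatorname{gr}}+\frac{s^3(s-1)^2}{4\mu^2}\frac{w(A)}{w(E)}\ge\left(1-\frac{s(s-1)(k-1)}{2\mu}\lambda_{\operatorname{gr}}\right)\sum_{i=2}^k(i-1)\frac{w(A^i_U)}{w(A)}.$$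
   Context: Let $s,k,K$ be positive integers. An $(s,k,K)$-two layer system is a triple $X=(V,E,T)$ where: $V$ is a finite set; $E\subseteq 2^V$ with $|\tau|=k$ for all $\tau\in E$ and $\bigcup_{\tau\in E}\tau=V$; $T\subseteq 2^E$ with $|\sigma|=K$ for all $\sigma\in T$ and $\bigcup_{\sigma\in T}\sigma=E$. Write $v\in\sigma$ if $v\in\tau$ for some $\tau\in\sigma$; it is required that $2\le|\{\tau\in\sigma:v\in\tau\}|\le s$ for all $\sigma\in T$, $v\in\sigma$ (so $s\ge2$). A positive $w:T\to\mathbb{R}_{>0}$ is fixed and extended by $w(\tau)=\sum_{\sigma\ni\tau}w(\sigma)$ ($\tau\in E$), $w(v)=\sum_{\sigma\in T,v\in\sigma}w(\sigma)$, $w(B)=\sum_{\eta\in B}w(\eta)$. For $v\in V$, $E_v=\{\tau\in E:v\in\tau\}$; the link of $v$ is the graph on $E_v$ where distinct $\tau_1,\tau_2$ are adjacent iff some $\sigma\in T$ contains both, with weight $m_v(\{\tau_1,\tau_2\})=\sum_{\sigma\in T,\tau_1,\tau_2\in\sigma}w(\sigma)$; $m_v(\tau)$ is the sum of weights of link edges at $\tau$, $m_v(B)=\sum_{\tau\in B}m_v(\tau)$. For $A\subseteq E$, $A_v=A\cap E_v$, and $v$ is $\mu$-large w.r.t. $A$ if $m_v(A_v)/m_v(E_v)\ge\mu$. The ground graph of $X$ has vertex set $V$, distinct $u,v$ adjacent iff some $\tau\in E$ contains both, with weight $m_{\operatorname{gr}}(\{u,v\})=\sum_{\tau\in E,u,v\in\tau}w(\tau)$.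 For a weighted graph $(V,E,m)$: $m(v)=\sum_{e\ni v}m(e)$, $m(U)=\sum_{v\in U}m(v)$, $m(U_1,U_2)=\sum_{(u_1,u_2)\in U_1\times U_2,\{u_1,u_2\}\in E}m(\{u_1,u_2\})$, $h_G=\min_{\emptyset\ne U\subsetneq V}\frac{m(U,V\setminus U)m(V)}{m(U)m(V\setminus U)}$; $G$ is a $\lambda$-expander if $1-h_G\le\lambda$. *)

theory Defs
  imports Complex_Main
begin

text \<open>A weighted graph is given by a finite vertex set VG and a weight function mw on pairs
  of vertices; mw u v is the weight of the edge {u,v} (and 0 if it is not an edge).\<close>

definition gvert_weight :: "'a set \<Rightarrow> ('a \<Rightarrow> 'a \<Rightarrow> real) \<Rightarrow> 'a \<Rightarrow> real" where
  "gvert_weight VG mw v = (\<Sum>u\<in>VG - {v}. mw v u)"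

definition gset_weight :: "'a set \<Rightarrow> ('a \<Rightarrow> 'a \<Rightarrow> real) \<Rightarrow> 'a set \<Rightarrow> real" where
  "gset_weight VG mw U = (\<Sum>v\<in>U. gvert_weight VG mw v)"

definition gcut_weight :: "('a \<Rightarrow> 'a \<Rightarrow> real) \<Rightarrow> 'a set \<Rightarrow> 'a set \<Rightarrow> real" where
  "gcut_weight mw U1 U2 = (\<Sum>p\<in>{p \<in> U1 \<times> U2. fst p \<noteq> snd p}. mw (fst p) (snd p))"

definition h_graph :: "'a set \<Rightarrow> ('a \<Rightarrow> 'a \<Rightarrow> real) \<Rightarrow> real" where
  "h_graph VG mw = Min ((\<lambda>U. gcut_weight mw U (VG - U) * gset_weight VG mw VG
        / (gset_weight VG mw U * gset_weight VG mw (VG - U))) ` {U. U \<noteq> {} \<and> U \<subset> VG})"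

definition is_expander :: "real \<Rightarrow> 'a set \<Rightarrow> ('a \<Rightarrow> 'a \<Rightarrow> real) \<Rightarrow> bool" where
  "is_expander lam VG mw \<longleftrightarrow> 1 - h_graph VG mw \<le> lam"

definition two_layer_system ::
  "nat \<Rightarrow> nat \<Rightarrow> nat \<Rightarrow> 'v set \<Rightarrow> 'v set set \<Rightarrow> 'v set set set \<Rightarrow> bool" where
  "two_layer_system s k K V E T \<longleftrightarrow>
     0 < s \<and> 0 < k \<and> 0 < K \<and> finite V \<and>
     E \<subseteq> Pow V \<and> (\<forall>\<tau>\<in>E. card \<tau> = k) \<and> \<Union>E = V \<and>
     T \<subseteq> Pow E \<and> (\<forall>\<sigma>\<in>T. card \<sigma> = K) \<and> \<Union>T = E \<and>
     (\<forall>\<sigma>\<in>T. \<forall>v\<in>\<Union>\<sigma>. 2 \<le> card {\<tau>\<in>\<sigma>. v \<in> \<tau>} \<and> card {\<tau>\<in>\<sigma>. v \<in> \<tau>} \<le> s)"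

text \<open>Weights: w is given on T; w(tau) and w(v) are induced.
  Note v \<in> sigma in the paper means v \<in> \<Union>sigma.\<close>

definition wE :: "'v set set set \<Rightarrow> ('v set set \<Rightarrow> real) \<Rightarrow> 'v set \<Rightarrow> real" where
  "wE T w \<tau> = (\<Sum>\<sigma>\<in>{\<sigma>\<in>T. \<tau> \<in> \<sigma>}. w \<sigma>)"

definition wEs :: "'v set set set \<Rightarrow> ('v set set \<Rightarrow> real) \<Rightarrow> 'v set set \<Rightarrow> real" where
  "wEs T w B = (\<Sum>\<tau>\<in>B. wE T w \<tau>)"

definition Ev :: "'v set set \<Rightarrow> 'v \<Rightarrow> 'v set set" where
  "Ev E v = {\<tau>\<in>E. v \<in> \<tau>}"

definition link_edge_weight ::
  "'v set set set \<Rightarrow> ('v set set \<Rightarrow> real) \<Rightarrow> 'v set \<Rightarrow> 'v set \<Rightarrow> real" where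
  "link_edge_weight T w \<tau>1 \<tau>2 = (\<Sum>\<sigma>\<in>{\<sigma>\<in>T. \<tau>1 \<in> \<sigma> \<and> \<tau>2 \<in> \<sigma>}. w \<sigma>)"

definition link_weight ::
  "'v set set \<Rightarrow> 'v set set set \<Rightarrow> ('v set set \<Rightarrow> real) \<Rightarrow> 'v \<Rightarrow> 'v set set \<Rightarrow> real" where
  "link_weight E T w v B = gset_weight (Ev E v) (link_edge_weight T w) B"

definition mu_large ::
  "'v set set \<Rightarrow> 'v set set set \<Rightarrow> ('v set set \<Rightarrow> real) \<Rightarrow> real \<Rightarrow> 'v set set \<Rightarrow> 'v \<Rightarrow> bool" where
  "mu_large E T w \<mu> A v \<longleftrightarrow>
     link_weight E T w v (A \<inter> Ev E v) / link_weight E T w v (Ev E v) \<ge> \<mu>"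

definition ground_weight ::
  "'v set set \<Rightarrow> 'v set set set \<Rightarrow> ('v set set \<Rightarrow> real) \<Rightarrow> 'v \<Rightarrow> 'v \<Rightarrow> real" where
  "ground_weight E T w u v = (\<Sum>\<tau>\<in>{\<tau>\<in>E. u \<in> \<tau> \<and> v \<in> \<tau>}. wE T w \<tau>)"

end

(*
  Write j(tau) = |tau \<inter> U|.  A face sigma containing tau contributes between w(sigma) and
  (s-1) w(sigma) to the link degree of tau at v, so mu-largeness of the vertices of U gives
  mu * sum_E w(tau) j(tau) <= (s-1) * sum_A w(tau) j(tau).  In the ground graph
  m(U) = (k-1) sum_E w j, m(V) = (k-1) k w(E), and the edges inside U weigh sum_E w j (j-1),
  which expansion bounds by lam m(U) + (1-lam) m(U)^2 / m(V).  Chebyshev's sum inequality for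
  the similarly ordered j-1 and j over A turns this into a self-bound x <= L + beta (1 + x) for
  x = sum_A w (j-1)^+ / w(A), with L <= s(s-1)(k-1) lam / (2 mu) and, by the smallness of
  w(A)/w(E), beta = ((s-1)/mu)^2 w(A)/w(E) <= 4/s^3 <= 1/2.  Solving for x gives the claim.
*)
theory Submission
  imports Defs
begin

lemma weighted_Chebyshev_sum:
  fixes c f g :: "'a \<Rightarrow> 'b::linordered_idom"
  assumes "\<And>a. a \<in> A \<Longrightarrow> 0 \<le> c a"
    and "\<And>a b. a \<in> A \<Longrightarrow> b \<in> A \<Longrightarrow> 0 \<le> (f a - f b) * (g a - g b)"
  shows "(\<Sum>a\<in>A. c a * f a) * (\<Sum>a\<in>A. c a * g a) \<le> (\<Sum>a\<in>A. c a) * (\<Sum>a\<in>A. c a * (f a * g a))"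
proof -
  define C where "C = (\<Sum>a\<in>A. c a)"
  define F where "F = (\<Sum>a\<in>A. c a * f a)"
  define G where "G = (\<Sum>a\<in>A. c a * g a)"
  define H where "H = (\<Sum>a\<in>A. c a * (f a * g a))"
  have "0 \<le> (\<Sum>a\<in>A. \<Sum>b\<in>A. c a * c b * ((f a - f b) * (g a - g b)))"
    using assms by (intro sum_nonneg) (simp add: mult_nonneg_nonneg)
  also have "\<dots> = (\<Sum>a\<in>A. \<Sum>b\<in>A. c a * (f a * g a) * c b + c a * (c b * (f b * g b))
                     - c a * f a * (c b * g b) - c a * g a * (c b * f b))"
    by (intro sum.cong refl) (simp add: algebra_simps)
  also have "\<dots> = (\<Sum>a\<in>A. c a * (f a * g a) * C + c a * H - c a * f a * G - c a * g a * F)"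
    unfolding C_def F_def G_def H_def
    by (simp add: sum_subtractf sum.distrib sum_distrib_left[symmetric])
  also have "\<dots> = H * C + C * H - F * G - G * F"
    unfolding C_def F_def G_def H_def by (simp add: sum_subtractf sum.distrib sum_distrib_right)
  finally show ?thesis
    unfolding C_def[symmetric] F_def[symmetric] G_def[symmetric] H_def[symmetric]
    by (simp add: algebra_simps)
qed

lemma sum_by_levels:
  fixes g :: "'a \<Rightarrow> real" and h :: "'a \<Rightarrow> nat"
  assumes "finite A" "\<And>a. a \<in> A \<Longrightarrow> h a \<le> n"
  shows "(\<Sum>i=2..n. (real i - 1) * (\<Sum>a\<in>{a\<in>A. h a = i}. g a)) = (\<Sum>a\<in>A. real (h a - 1) * g a)"
proof -
  have "(\<Sum>i=2..n. (real i - 1) * (\<Sum>a\<in>{a\<in>A. h a = i}. g a))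
      = (\<Sum>a\<in>A. \<Sum>i\<in>{i\<in>{2..n}. h a = i}. (real i - 1) * g a)"
    using sum.swap_restrict[of "{2..n}" A "\<lambda>i a. (real i - 1) * g a" "\<lambda>i a. h a = i"] assms(1)
    by (simp add: sum_distrib_left)
  also have "\<dots> = (\<Sum>a\<in>A. real (h a - 1) * g a)"
  proof (intro sum.cong refl)
    fix a assume "a \<in> A"
    then have "{i\<in>{2..n}. h a = i} = (if 2 \<le> h a then {h a} else {})"
      using assms(2) by auto
    then show "(\<Sum>i\<in>{i\<in>{2..n}. h a = i}. (real i - 1) * g a) = real (h a - 1) * g a"
      by (simp add: of_nat_diff)
  qed
  finally show ?thesis .
qed

lemma sum_Ev_eq_card_inter:
  fixes g :: "'v set \<Rightarrow> real"
  assumes "finite U" "finite B"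
  shows "(\<Sum>v\<in>U. \<Sum>\<tau>\<in>Ev B v. g \<tau>) = (\<Sum>\<tau>\<in>B. real (card (\<tau> \<inter> U)) * g \<tau>)"
proof -
  have "(\<Sum>v\<in>U. \<Sum>\<tau>\<in>Ev B v. g \<tau>) = (\<Sum>\<tau>\<in>B. \<Sum>v\<in>{v\<in>U. v \<in> \<tau>}. g \<tau>)"
    unfolding Ev_def using sum.swap_restrict[OF assms, of "\<lambda>v \<tau>. g \<tau>" "\<lambda>v \<tau>. v \<in> \<tau>"] by simp
  also have "\<dots> = (\<Sum>\<tau>\<in>B. real (card (\<tau> \<inter> U)) * g \<tau>)"
  proof (intro sum.cong refl)
    fix \<tau>
    have "{v\<in>U. v \<in> \<tau>} = \<tau> \<inter> U" by auto
    then show "(\<Sum>v\<in>{v\<in>U. v \<in> \<tau>}. g \<tau>) = real (card (\<tau> \<inter> U)) * g \<tau>" by simp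
  qed
  finally show ?thesis .
qed

lemma card_off_diagonal:
  assumes "finite B"
  shows "card {p \<in> B \<times> B. fst p \<noteq> snd p} = card B * (card B - 1)"
proof -
  have "B \<times> B = {p \<in> B \<times> B. fst p \<noteq> snd p} \<union> (\<lambda>x. (x, x)) ` B"
    by auto
  moreover have "card ((\<lambda>x. (x, x)) ` B) = card B"
    by (intro card_image) (auto simp: inj_on_def)
  moreover have "card ({p \<in> B \<times> B. fst p \<noteq> snd p} \<union> (\<lambda>x. (x, x)) ` B)
      = card {p \<in> B \<times> B. fst p \<noteq> snd p} + card ((\<lambda>x. (x, x)) ` B)"
    using assms by (intro card_Un_disjoint) auto
  ultimately have "card B * card B = card {p \<in> B \<times> B. fst p \<noteq> snd p} + card B"
    by (simp add: card_cartesian_product)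
  then show ?thesis
    by (simp add: diff_mult_distrib2)
qed

lemma gset_weight_eq_inner_plus_cut:
  assumes "finite VG" "U \<subseteq> VG"
  shows "gset_weight VG mw U = gcut_weight mw U U + gcut_weight mw U (VG - U)"
proof -
  have "finite U"
    using assms finite_subset by blast
  have "gset_weight VG mw U = (\<Sum>p\<in>Sigma U (\<lambda>v. VG - {v}). mw (fst p) (snd p))"
    unfolding gset_weight_def gvert_weight_def using assms \<open>finite U\<close> by (simp add: sum.Sigma split_def)
  also have "Sigma U (\<lambda>v. VG - {v})
      = {p \<in> U \<times> U. fst p \<noteq> snd p} \<union> {p \<in> U \<times> (VG - U). fst p \<noteq> snd p}"
    using assms by auto
  also have "(\<Sum>p\<in>\<dots>. mw (fst p) (snd p)) = gcut_weight mw U U + gcut_weight mw U (VG - U)"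
    unfolding gcut_weight_def using assms \<open>finite U\<close> by (intro sum.union_disjoint) auto
  finally show ?thesis .
qed

lemma is_expander_cut_bound:
  assumes "finite VG" "U \<subseteq> VG" "U \<noteq> {}" "U \<noteq> VG"
    and "0 < gset_weight VG mw U" "0 < gset_weight VG mw (VG - U)"
    and "is_expander lam VG mw"
  shows "(1 - lam) * (gset_weight VG mw U * gset_weight VG mw (VG - U))
           \<le> gcut_weight mw U (VG - U) * gset_weight VG mw VG"
proof -
  define ratio where "ratio U = gcut_weight mw U (VG - U) * gset_weight VG mw VG
      / (gset_weight VG mw U * gset_weight VG mw (VG - U))" for U
  have "finite {U. U \<noteq> {} \<and> U \<subset> VG}"
    by (rule finite_subset[of _ "Pow VG"]) (auto simp: \<open>finite VG\<close>)
  moreover have "U \<in> {U. U \<noteq> {} \<and> U \<subset> VG}"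
    using assms by auto
  ultimately have "h_graph VG mw \<le> ratio U"
    unfolding h_graph_def ratio_def[symmetric] by (meson Min_le finite_imageI imageI)
  then have "1 - lam \<le> ratio U"
    using \<open>is_expander lam VG mw\<close> unfolding is_expander_def by simp
  then show ?thesis
    unfolding ratio_def using assms(5,6) by (simp add: pos_le_divide_eq)
qed

text \<open>Expander mixing for the edges inside U: their weight exceeds the share
  \<open>m(U)\<^sup>2 / m(V)\<close> of a random graph with the same degrees by at most \<open>lam * m(U)\<close>.\<close>

lemma is_expander_inner_weight_bound:
  assumes "finite VG" "U \<subseteq> VG" "\<And>u v. 0 \<le> mw u v" "is_expander lam VG mw"
  shows "gcut_weight mw U U * gset_weight VG mw VG
           \<le> lam * gset_weight VG mw U * gset_weight VG mw VG + (1 - lam) * (gset_weight VG mw U)\<^sup>2"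
proof -
  let ?m = "gset_weight VG mw" and ?cut = "gcut_weight mw U (VG - U)"
  have nonneg: "0 \<le> ?m B" for B
    unfolding gset_weight_def gvert_weight_def using assms(3) by (intro sum_nonneg) auto
  have inner: "gcut_weight mw U U = ?m U - ?cut"
    using gset_weight_eq_inner_plus_cut[OF assms(1,2)] by simp
  have outer: "?m (VG - U) = ?m VG - ?m U"
    unfolding gset_weight_def using sum.subset_diff[OF assms(2,1), of "gvert_weight VG mw"] by simp
  have "(1 - lam) * (?m U * ?m (VG - U)) \<le> ?cut * ?m VG"
  proof (cases "0 < ?m U \<and> 0 < ?m (VG - U)")
    case True
    then have "U \<noteq> {}" "U \<noteq> VG"
      unfolding gset_weight_def by auto
    with True assms show ?thesis
      by (intro is_expander_cut_bound) auto
  next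
    case False
    then have "?m U * ?m (VG - U) = 0"
      using nonneg[of U] nonneg[of "VG - U"] by auto
    moreover have "0 \<le> ?cut"
      unfolding gcut_weight_def using assms(3) by (intro sum_nonneg) auto
    ultimately show ?thesis
      using nonneg[of VG] by (metis mult_nonneg_nonneg mult_zero_right)
  qed
  then show ?thesis
    unfolding inner outer by (simp add: algebra_simps power2_eq_square)
qed

locale weighted_two_layer_system =
  fixes s k K :: nat and V :: "'v set" and E :: "'v set set" and T :: "'v set set set"
    and w :: "'v set set \<Rightarrow> real"
  assumes two_layer: "two_layer_system s k K V E T"
    and weight_pos: "\<forall>\<sigma>\<in>T. 0 < w \<sigma>"
begin

lemma
  shows finite_V: "finite V"
    and edges_Pow: "E \<subseteq> Pow V"
    and card_edge: "\<tau> \<in> E \<Longrightarrow> card \<tau> = k"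
    and s_pos: "0 < s"
    and k_pos: "0 < k"
    and faces_Pow: "T \<subseteq> Pow E"
    and Union_faces: "\<Union>T = E"
    and card_face_at_bounds: "\<sigma> \<in> T \<Longrightarrow> v \<in> \<Union>\<sigma> \<Longrightarrow>
           2 \<le> card {\<tau>\<in>\<sigma>. v \<in> \<tau>} \<and> card {\<tau>\<in>\<sigma>. v \<in> \<tau>} \<le> s"
  using two_layer unfolding two_layer_system_def by auto

lemma finite_E: "finite E"
  using finite_V edges_Pow by (meson finite_Pow_iff finite_subset)

lemma finite_T: "finite T"
  using finite_E faces_Pow by (meson finite_Pow_iff finite_subset)

lemma finite_edge: "\<tau> \<in> E \<Longrightarrow> finite \<tau>"
  using finite_V edges_Pow finite_subset by blast

lemma finite_face: "\<sigma> \<in> T \<Longrightarrow> finite \<sigma>"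
  using finite_E faces_Pow finite_subset by blast

lemma wE_nonneg: "0 \<le> wE T w \<tau>"
  unfolding wE_def using weight_pos by (intro sum_nonneg) auto

lemma wEs_nonneg: "0 \<le> wEs T w B"
  unfolding wEs_def using wE_nonneg by (intro sum_nonneg) auto

lemma wE_pos:
  assumes "\<tau> \<in> E"
  shows "0 < wE T w \<tau>"
proof -
  obtain \<sigma> where "\<sigma> \<in> T" "\<tau> \<in> \<sigma>"
    using assms Union_faces by auto
  then have "w \<sigma> \<le> wE T w \<tau>"
    unfolding wE_def using finite_T weight_pos by (intro member_le_sum) auto
  with \<open>\<sigma> \<in> T\<close> weight_pos show ?thesis
    by fastforce
qed

lemma wEs_pos:
  assumes "B \<subseteq> E" "B \<noteq> {}"
  shows "0 < wEs T w B"
proof -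
  obtain \<tau> where "\<tau> \<in> B"
    using assms by auto
  then have "wE T w \<tau> \<le> wEs T w B"
    unfolding wEs_def using assms finite_E finite_subset wE_nonneg by (intro member_le_sum) auto
  with \<open>\<tau> \<in> B\<close> assms wE_pos show ?thesis
    by fastforce
qed

lemma two_le_s:
  assumes "E \<noteq> {}"
  shows "2 \<le> s"
proof -
  obtain \<tau> where "\<tau> \<in> E"
    using assms by auto
  then obtain \<sigma> where "\<sigma> \<in> T" "\<tau> \<in> \<sigma>"
    using Union_faces by auto
  obtain v where "v \<in> \<tau>"
    using \<open>\<tau> \<in> E\<close> card_edge k_pos by fastforce
  with \<open>\<tau> \<in> \<sigma>\<close> have "v \<in> \<Union>\<sigma>"
    by auto
  then show ?thesis
    using card_face_at_bounds[OF \<open>\<sigma> \<in> T\<close>] by fastforce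
qed

lemma link_degree_eq:
  assumes "\<tau> \<in> Ev E v"
  shows "gvert_weight (Ev E v) (link_edge_weight T w) \<tau>
           = (\<Sum>\<sigma>\<in>{\<sigma>\<in>T. \<tau> \<in> \<sigma>}. w \<sigma> * (real (card {\<tau>'\<in>\<sigma>. v \<in> \<tau>'}) - 1))"
proof -
  have "finite (Ev E v)"
    using finite_E unfolding Ev_def by auto
  have "gvert_weight (Ev E v) (link_edge_weight T w) \<tau>
      = (\<Sum>\<tau>'\<in>Ev E v - {\<tau>}. \<Sum>\<sigma>\<in>{\<sigma>\<in>T. \<tau> \<in> \<sigma> \<and> \<tau>' \<in> \<sigma>}. w \<sigma>)"
    unfolding gvert_weight_def link_edge_weight_def by simp
  also have "\<dots> = (\<Sum>\<sigma>\<in>T. \<Sum>\<tau>'\<in>{\<tau>'\<in>Ev E v - {\<tau>}. \<tau> \<in> \<sigma> \<and> \<tau>' \<in> \<sigma>}. w \<sigma>)"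
    using \<open>finite (Ev E v)\<close> finite_T by (intro sum.swap_restrict) auto
  also have "\<dots> = (\<Sum>\<sigma>\<in>T. if \<tau> \<in> \<sigma> then w \<sigma> * (real (card {\<tau>'\<in>\<sigma>. v \<in> \<tau>'}) - 1) else 0)"
  proof (intro sum.cong refl)
    fix \<sigma> assume "\<sigma> \<in> T"
    show "(\<Sum>\<tau>'\<in>{\<tau>'\<in>Ev E v - {\<tau>}. \<tau> \<in> \<sigma> \<and> \<tau>' \<in> \<sigma>}. w \<sigma>)
        = (if \<tau> \<in> \<sigma> then w \<sigma> * (real (card {\<tau>'\<in>\<sigma>. v \<in> \<tau>'}) - 1) else 0)"
    proof (cases "\<tau> \<in> \<sigma>")
      case True
      let ?C = "{\<tau>'\<in>\<sigma>. v \<in> \<tau>'}"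
      have restrict: "{\<tau>'\<in>Ev E v - {\<tau>}. \<tau> \<in> \<sigma> \<and> \<tau>' \<in> \<sigma>} = ?C - {\<tau>}"
        using True \<open>\<sigma> \<in> T\<close> faces_Pow unfolding Ev_def by auto
      have "\<tau> \<in> ?C"
        using True assms unfolding Ev_def by auto
      moreover have "finite ?C"
        using finite_face[OF \<open>\<sigma> \<in> T\<close>] by simp
      ultimately have "1 \<le> card ?C" "card (?C - {\<tau>}) = card ?C - 1"
        by (auto simp: Suc_le_eq card_gt_0_iff)
      with True restrict show ?thesis
        by (simp add: of_nat_diff mult.commute)
    qed simp
  qed
  also have "\<dots> = (\<Sum>\<sigma>\<in>{\<sigma>\<in>T. \<tau> \<in> \<sigma>}. w \<sigma> * (real (card {\<tau>'\<in>\<sigma>. v \<in> \<tau>'}) - 1))"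
    using finite_T by (simp add: sum.inter_filter)
  finally show ?thesis .
qed

lemma link_degree_bounds:
  assumes "\<tau> \<in> Ev E v"
  shows "wE T w \<tau> \<le> gvert_weight (Ev E v) (link_edge_weight T w) \<tau>"
    and "gvert_weight (Ev E v) (link_edge_weight T w) \<tau> \<le> (real s - 1) * wE T w \<tau>"
proof -
  have bounds: "1 \<le> real (card {\<tau>'\<in>\<sigma>. v \<in> \<tau>'}) - 1 \<and> real (card {\<tau>'\<in>\<sigma>. v \<in> \<tau>'}) - 1 \<le> real s - 1"
    if "\<sigma> \<in> T" "\<tau> \<in> \<sigma>" for \<sigma>
  proof -
    have "v \<in> \<Union>\<sigma>"
      using that assms unfolding Ev_def by auto
    then show ?thesis
      using card_face_at_bounds[OF \<open>\<sigma> \<in> T\<close>] by auto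
  qed
  show "wE T w \<tau> \<le> gvert_weight (Ev E v) (link_edge_weight T w) \<tau>"
    unfolding link_degree_eq[OF assms] wE_def
  proof (intro sum_mono)
    fix \<sigma> assume "\<sigma> \<in> {\<sigma>\<in>T. \<tau> \<in> \<sigma>}"
    then show "w \<sigma> \<le> w \<sigma> * (real (card {\<tau>'\<in>\<sigma>. v \<in> \<tau>'}) - 1)"
      using bounds weight_pos mult_left_mono[of 1 _ "w \<sigma>"] by fastforce
  qed
  show "gvert_weight (Ev E v) (link_edge_weight T w) \<tau> \<le> (real s - 1) * wE T w \<tau>"
    unfolding link_degree_eq[OF assms] wE_def sum_distrib_left
  proof (intro sum_mono)
    fix \<sigma> assume "\<sigma> \<in> {\<sigma>\<in>T. \<tau> \<in> \<sigma>}"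
    then show "w \<sigma> * (real (card {\<tau>'\<in>\<sigma>. v \<in> \<tau>'}) - 1) \<le> (real s - 1) * w \<sigma>"
      using bounds weight_pos mult_left_mono[of _ "real s - 1" "w \<sigma>"] by (fastforce simp: mult.commute)
  qed
qed

lemma mu_large_weight_bound:
  assumes "0 < \<mu>" "A \<subseteq> E" "mu_large E T w \<mu> A v"
  shows "\<mu> * (\<Sum>\<tau>\<in>Ev E v. wE T w \<tau>) \<le> (real s - 1) * (\<Sum>\<tau>\<in>Ev A v. wE T w \<tau>)"
proof -
  let ?m = "link_weight E T w v"
  have m_eq: "?m B = (\<Sum>\<tau>\<in>B. gvert_weight (Ev E v) (link_edge_weight T w) \<tau>)" for B
    unfolding link_weight_def gset_weight_def by simp
  have lower: "(\<Sum>\<tau>\<in>Ev E v. wE T w \<tau>) \<le> ?m (Ev E v)"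
    unfolding m_eq using link_degree_bounds(1) by (intro sum_mono) auto
  have "0 < ?m (Ev E v)"
    \<comment> \<open>otherwise the ratio in \<open>mu_large\<close> is \<open>x / 0 = 0 < \<mu>\<close>\<close>
  proof (rule ccontr)
    assume "\<not> 0 < ?m (Ev E v)"
    then have "?m (Ev E v) = 0"
      using lower sum_nonneg[of "Ev E v" "wE T w"] wE_nonneg by simp
    with assms show False
      unfolding mu_large_def by simp
  qed
  then have "\<mu> * ?m (Ev E v) \<le> ?m (A \<inter> Ev E v)"
    using assms(3) unfolding mu_large_def by (simp add: le_divide_eq)
  also have "\<dots> \<le> (real s - 1) * (\<Sum>\<tau>\<in>A \<inter> Ev E v. wE T w \<tau>)"
    unfolding m_eq sum_distrib_left using link_degree_bounds(2) by (intro sum_mono) auto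
  also have "A \<inter> Ev E v = Ev A v"
    using assms(2) unfolding Ev_def by auto
  finally show ?thesis
    using lower assms(1) by (meson mult_left_mono less_imp_le order_trans)
qed

definition incidence_weight :: "'v set set \<Rightarrow> 'v set \<Rightarrow> real" where
  "incidence_weight B U = (\<Sum>\<tau>\<in>B. wE T w \<tau> * real (card (\<tau> \<inter> U)))"

definition inner_pair_weight :: "'v set set \<Rightarrow> 'v set \<Rightarrow> real" where
  "inner_pair_weight B U = (\<Sum>\<tau>\<in>B. wE T w \<tau> * real (card (\<tau> \<inter> U) * (card (\<tau> \<inter> U) - 1)))"

text \<open>With truncated subtraction, edges meeting U at most once contribute nothing.\<close>
definition excess_weight :: "'v set set \<Rightarrow> 'v set \<Rightarrow> real" where
  "excess_weight B U = (\<Sum>\<tau>\<in>B. wE T w \<tau> * real (card (\<tau> \<inter> U) - 1))"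

lemma incidence_weight_nonneg: "0 \<le> incidence_weight B U"
  unfolding incidence_weight_def using wE_nonneg by (intro sum_nonneg) auto

lemma excess_weight_nonneg: "0 \<le> excess_weight B U"
  unfolding excess_weight_def using wE_nonneg by (intro sum_nonneg) auto

lemma excess_le_incidence_weight: "excess_weight B U \<le> incidence_weight B U"
  unfolding excess_weight_def incidence_weight_def
  using wE_nonneg by (intro sum_mono mult_left_mono) auto

lemma incidence_le_excess_weight: "incidence_weight B U \<le> wEs T w B + excess_weight B U"
  unfolding excess_weight_def incidence_weight_def wEs_def sum.distrib[symmetric]
proof (intro sum_mono)
  fix \<tau>
  have "real (card (\<tau> \<inter> U)) \<le> 1 + real (card (\<tau> \<inter> U) - 1)"
    by linarith
  then show "wE T w \<tau> * real (card (\<tau> \<inter> U)) \<le> wE T w \<tau> + wE T w \<tau> * real (card (\<tau> \<inter> U) - 1)"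
    using wE_nonneg mult_left_mono by (fastforce simp: distrib_left)
qed

lemma inner_pair_weight_mono:
  assumes "A \<subseteq> E"
  shows "inner_pair_weight A U \<le> inner_pair_weight E U"
  unfolding inner_pair_weight_def using assms finite_E wE_nonneg by (intro sum_mono2) auto

lemma excess_incidence_Chebyshev:
  "excess_weight A U * incidence_weight A U \<le> wEs T w A * inner_pair_weight A U"
proof -
  let ?j = "\<lambda>\<tau>. card (\<tau> \<inter> U)"
  have "(\<Sum>\<tau>\<in>A. wE T w \<tau> * real (?j \<tau> - 1)) * (\<Sum>\<tau>\<in>A. wE T w \<tau> * real (?j \<tau>))
      \<le> (\<Sum>\<tau>\<in>A. wE T w \<tau>) * (\<Sum>\<tau>\<in>A. wE T w \<tau> * (real (?j \<tau> - 1) * real (?j \<tau>)))"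
  proof (rule weighted_Chebyshev_sum)
    fix a b
    show "0 \<le> (real (?j a - 1) - real (?j b - 1)) * (real (?j a) - real (?j b))"
      by (cases "?j a \<le> ?j b") (auto intro: mult_nonpos_nonpos mult_nonneg_nonneg)
  qed (rule wE_nonneg)
  then show ?thesis
    unfolding excess_weight_def incidence_weight_def wEs_def inner_pair_weight_def
    by (simp add: mult.commute)
qed

lemma mu_large_incidence_bound:
  assumes "0 < \<mu>" "A \<subseteq> E" "finite U" "\<forall>v\<in>U. mu_large E T w \<mu> A v"
  shows "\<mu> * incidence_weight E U \<le> (real s - 1) * incidence_weight A U"
proof -
  have "finite A"
    using assms(2) finite_E finite_subset by blast
  have "\<mu> * incidence_weight E U = (\<Sum>v\<in>U. \<mu> * (\<Sum>\<tau>\<in>Ev E v. wE T w \<tau>))"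
    unfolding incidence_weight_def sum_distrib_left[symmetric]
    using sum_Ev_eq_card_inter[OF assms(3) finite_E] by (simp add: mult.commute)
  also have "\<dots> \<le> (\<Sum>v\<in>U. (real s - 1) * (\<Sum>\<tau>\<in>Ev A v. wE T w \<tau>))"
    using assms mu_large_weight_bound by (intro sum_mono) auto
  also have "\<dots> = (real s - 1) * incidence_weight A U"
    unfolding incidence_weight_def sum_distrib_left[symmetric]
    using sum_Ev_eq_card_inter[OF assms(3) \<open>finite A\<close>] by (simp add: mult.commute)
  finally show ?thesis .
qed

lemma ground_weight_nonneg: "0 \<le> ground_weight E T w u v"
  unfolding ground_weight_def using wE_nonneg by (intro sum_nonneg) auto

lemma ground_vertex_weight:
  "gvert_weight V (ground_weight E T w) v = (real k - 1) * (\<Sum>\<tau>\<in>Ev E v. wE T w \<tau>)"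
proof -
  have "gvert_weight V (ground_weight E T w) v
      = (\<Sum>u\<in>V - {v}. \<Sum>\<tau>\<in>{\<tau>\<in>E. v \<in> \<tau> \<and> u \<in> \<tau>}. wE T w \<tau>)"
    unfolding gvert_weight_def ground_weight_def by simp
  also have "\<dots> = (\<Sum>\<tau>\<in>E. \<Sum>u\<in>{u\<in>V - {v}. v \<in> \<tau> \<and> u \<in> \<tau>}. wE T w \<tau>)"
    using finite_V finite_E by (intro sum.swap_restrict) auto
  also have "\<dots> = (\<Sum>\<tau>\<in>E. if v \<in> \<tau> then (real k - 1) * wE T w \<tau> else 0)"
  proof (intro sum.cong refl)
    fix \<tau> assume "\<tau> \<in> E"
    show "(\<Sum>u\<in>{u\<in>V - {v}. v \<in> \<tau> \<and> u \<in> \<tau>}. wE T w \<tau>) = (if v \<in> \<tau> then (real k - 1) * wE T w \<tau> else 0)"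
    proof (cases "v \<in> \<tau>")
      case True
      have "{u\<in>V - {v}. v \<in> \<tau> \<and> u \<in> \<tau>} = \<tau> - {v}"
        using True \<open>\<tau> \<in> E\<close> edges_Pow by auto
      moreover have "card (\<tau> - {v}) = k - 1"
        using True \<open>\<tau> \<in> E\<close> card_edge finite_edge by simp
      ultimately show ?thesis
        using True k_pos by (simp add: of_nat_diff)
    qed simp
  qed
  also have "\<dots> = (real k - 1) * (\<Sum>\<tau>\<in>Ev E v. wE T w \<tau>)"
    unfolding Ev_def sum_distrib_left using finite_E by (simp add: sum.inter_filter)
  finally show ?thesis .
qed

lemma ground_set_weight:
  assumes "finite U"
  shows "gset_weight V (ground_weight E T w) U = (real k - 1) * incidence_weight E U"
  unfolding gset_weight_def ground_vertex_weight incidence_weight_def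
  using sum_Ev_eq_card_inter[OF assms finite_E]
  by (simp add: sum_distrib_left[symmetric] mult.commute)

lemma ground_total_weight:
  "gset_weight V (ground_weight E T w) V = (real k - 1) * real k * wEs T w E"
proof -
  have "incidence_weight E V = real k * wEs T w E"
    unfolding incidence_weight_def wEs_def sum_distrib_left
  proof (intro sum.cong refl)
    fix \<tau> assume "\<tau> \<in> E"
    then have "\<tau> \<inter> V = \<tau>" "card \<tau> = k"
      using edges_Pow card_edge by auto
    then show "wE T w \<tau> * real (card (\<tau> \<inter> V)) = real k * wE T w \<tau>"
      by simp
  qed
  then show ?thesis
    using ground_set_weight[OF finite_V] by simp
qed

lemma ground_inner_weight:
  assumes "finite U"
  shows "gcut_weight (ground_weight E T w) U U = inner_pair_weight E U"
proof -
  define P where "P = {p \<in> U \<times> U. fst p \<noteq> snd p}"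
  have "finite P"
    unfolding P_def using assms by auto
  have "gcut_weight (ground_weight E T w) U U
      = (\<Sum>p\<in>P. \<Sum>\<tau>\<in>{\<tau>\<in>E. fst p \<in> \<tau> \<and> snd p \<in> \<tau>}. wE T w \<tau>)"
    unfolding gcut_weight_def ground_weight_def P_def by simp
  also have "\<dots> = (\<Sum>\<tau>\<in>E. \<Sum>p\<in>{p\<in>P. fst p \<in> \<tau> \<and> snd p \<in> \<tau>}. wE T w \<tau>)"
    using \<open>finite P\<close> finite_E by (intro sum.swap_restrict) auto
  also have "\<dots> = inner_pair_weight E U"
    unfolding inner_pair_weight_def
  proof (intro sum.cong refl)
    fix \<tau>
    have "{p\<in>P. fst p \<in> \<tau> \<and> snd p \<in> \<tau>} = {p \<in> (\<tau> \<inter> U) \<times> (\<tau> \<inter> U). fst p \<noteq> snd p}"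
      unfolding P_def by auto
    then show "(\<Sum>p\<in>{p\<in>P. fst p \<in> \<tau> \<and> snd p \<in> \<tau>}. wE T w \<tau>)
        = wE T w \<tau> * real (card (\<tau> \<inter> U) * (card (\<tau> \<inter> U) - 1))"
      using card_off_diagonal[of "\<tau> \<inter> U"] assms by (simp add: mult.commute)
  qed
  finally show ?thesis .
qed

lemma inner_pair_weight_bound:
  assumes "E \<noteq> {}" "U \<subseteq> V" "0 \<le> lam" "is_expander lam V (ground_weight E T w)"
  shows "inner_pair_weight E U
           \<le> lam * (real k - 1) * incidence_weight E U + (incidence_weight E U)\<^sup>2 / wEs T w E"
proof (cases "k = 1")
  case True
  have "inner_pair_weight E U = 0"
    unfolding inner_pair_weight_def
  proof (intro sum.neutral ballI)
    fix \<tau> assume "\<tau> \<in> E"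
    then have "card (\<tau> \<inter> U) \<le> 1"
      using True card_edge finite_edge card_mono[of \<tau> "\<tau> \<inter> U"] by fastforce
    then show "wE T w \<tau> * real (card (\<tau> \<inter> U) * (card (\<tau> \<inter> U) - 1)) = 0"
      by simp
  qed
  with True show ?thesis
    using wEs_nonneg by simp
next
  case False
  let ?P = "incidence_weight E U" and ?W = "wEs T w E"
  have "2 \<le> k" "0 < ?W" "finite U"
    using False k_pos wEs_pos[of E] assms(1,2) finite_V finite_subset by auto
  define mU where "mU = (real k - 1) * ?P"
  define mV where "mV = (real k - 1) * real k * ?W"
  have "0 < mV"
    unfolding mV_def using \<open>2 \<le> k\<close> \<open>0 < ?W\<close> by simp
  have "inner_pair_weight E U * mV \<le> lam * mU * mV + (1 - lam) * mU\<^sup>2"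
    using is_expander_inner_weight_bound[OF finite_V assms(2) ground_weight_nonneg assms(4)]
    unfolding mU_def mV_def
    by (simp add: ground_inner_weight ground_set_weight ground_total_weight \<open>finite U\<close>)
  also have "\<dots> = (lam * mU + (1 - lam) * mU\<^sup>2 / mV) * mV"
    using \<open>0 < mV\<close> by (simp add: distrib_right)
  finally have "inner_pair_weight E U \<le> lam * mU + (1 - lam) * mU\<^sup>2 / mV"
    using \<open>0 < mV\<close> by (simp only: mult_le_cancel_right_pos)
  also have "(1 - lam) * mU\<^sup>2 / mV = (1 - lam) * ((real k - 1) / real k) * (?P\<^sup>2 / ?W)"
    unfolding mU_def mV_def
    by (cases "real k - 1 = 0 \<or> real k = 0 \<or> ?W = 0") (auto simp: power2_eq_square)
  also have "(1 - lam) * ((real k - 1) / real k) \<le> 1"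
    using \<open>2 \<le> k\<close> assms(3) mult_left_mono[of 1 "real k" lam] by (simp add: field_simps)
  then have "(1 - lam) * ((real k - 1) / real k) * (?P\<^sup>2 / ?W) \<le> 1 * (?P\<^sup>2 / ?W)"
    using \<open>0 < ?W\<close> by (intro mult_right_mono) auto
  finally show ?thesis
    unfolding mU_def by (simp add: mult.assoc)
qed

lemma inner_pair_incidence_bound:
  assumes "A \<subseteq> E" "E \<noteq> {}" "U \<subseteq> V" "\<forall>v\<in>U. mu_large E T w \<mu> A v"
    and "0 < \<mu>" "0 \<le> lam" "is_expander lam V (ground_weight E T w)"
  shows "inner_pair_weight A U
           \<le> lam * (real k - 1) * (real s - 1) / \<mu> * incidence_weight A U
             + ((real s - 1) / \<mu>)\<^sup>2 * (incidence_weight A U)\<^sup>2 / wEs T w E"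
proof -
  let ?P = "incidence_weight E U" and ?S1 = "incidence_weight A U" and ?W = "wEs T w E"
  have "finite U"
    using assms(3) finite_V finite_subset by blast
  have P_bound: "?P \<le> (real s - 1) / \<mu> * ?S1"
    using mu_large_incidence_bound[OF assms(5,1) \<open>finite U\<close> assms(4)] assms(5)
    by (simp add: field_simps)
  have "inner_pair_weight A U \<le> lam * (real k - 1) * ?P + ?P\<^sup>2 / ?W"
    using inner_pair_weight_mono[OF assms(1), of U] inner_pair_weight_bound[OF assms(2,3,6,7)]
    by linarith
  also have "\<dots> \<le> lam * (real k - 1) * ((real s - 1) / \<mu> * ?S1) + ((real s - 1) / \<mu> * ?S1)\<^sup>2 / ?W"
    using P_bound incidence_weight_nonneg wEs_nonneg k_pos assms(6)
    by (intro add_mono mult_left_mono divide_right_mono power_mono) auto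
  also have "\<dots> = lam * (real k - 1) * (real s - 1) / \<mu> * ?S1 + ((real s - 1) / \<mu>)\<^sup>2 * ?S1\<^sup>2 / ?W"
    by (simp add: power_mult_distrib power_divide mult.assoc)
  finally show ?thesis .
qed

lemma excess_ratio_self_bound:
  assumes "A \<subseteq> E" "A \<noteq> {}" "U \<subseteq> V" "\<forall>v\<in>U. mu_large E T w \<mu> A v"
    and "0 < \<mu>" "0 \<le> lam" "is_expander lam V (ground_weight E T w)"
  shows "excess_weight A U / wEs T w A
           \<le> lam * (real k - 1) * (real s - 1) / \<mu>
             + ((real s - 1) / \<mu>)\<^sup>2 * (wEs T w A / wEs T w E) * (1 + excess_weight A U / wEs T w A)"
proof -
  define S where "S = excess_weight A U"
  define S1 where "S1 = incidence_weight A U"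
  define WA where "WA = wEs T w A"
  define W where "W = wEs T w E"
  define L where "L = lam * (real k - 1) * (real s - 1) / \<mu>"
  define \<gamma> where "\<gamma> = ((real s - 1) / \<mu>)\<^sup>2"
  have "E \<noteq> {}"
    using assms(1,2) by auto
  have "0 < WA" "0 < W"
    unfolding WA_def W_def using wEs_pos assms(1,2) \<open>E \<noteq> {}\<close> by auto
  have "0 \<le> L" "0 \<le> \<gamma>"
    unfolding L_def \<gamma>_def using assms(5,6) s_pos k_pos by auto
  have inner_bound: "inner_pair_weight A U \<le> L * S1 + \<gamma> * S1\<^sup>2 / W"
    using inner_pair_incidence_bound[OF assms(1) \<open>E \<noteq> {}\<close> assms(3-7)]
    unfolding L_def \<gamma>_def S1_def W_def by (simp add: mult.assoc)
  have "S \<le> WA * L + \<gamma> * (WA + S) * (WA / W)"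
  proof (cases "S1 = 0")
    case True
    then have "S = 0"
      using excess_le_incidence_weight excess_weight_nonneg unfolding S_def S1_def by (metis order_antisym)
    then show ?thesis
      using \<open>0 < WA\<close> \<open>0 < W\<close> \<open>0 \<le> L\<close> \<open>0 \<le> \<gamma>\<close> by simp
  next
    case False
    then have "0 < S1"
      using incidence_weight_nonneg unfolding S1_def by (simp add: order_less_le)
    have "S * S1 \<le> WA * (L * S1 + \<gamma> * S1\<^sup>2 / W)"
      using excess_incidence_Chebyshev inner_bound \<open>0 < WA\<close> unfolding S_def S1_def WA_def
      by (meson mult_left_mono less_imp_le order_trans)
    also have "\<dots> = (WA * L + \<gamma> * S1 * (WA / W)) * S1"
      by (simp add: algebra_simps power2_eq_square)
    finally have "S \<le> WA * L + \<gamma> * S1 * (WA / W)"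
      using \<open>0 < S1\<close> by simp
    also have "\<dots> \<le> WA * L + \<gamma> * (WA + S) * (WA / W)"
      using incidence_le_excess_weight \<open>0 < WA\<close> \<open>0 < W\<close> \<open>0 \<le> \<gamma>\<close> unfolding S_def S1_def WA_def
      by (intro add_left_mono mult_right_mono mult_left_mono) auto
    finally show ?thesis .
  qed
  then show ?thesis
    unfolding S_def[symmetric] WA_def[symmetric] W_def[symmetric] L_def[symmetric] \<gamma>_def[symmetric]
    using \<open>0 < WA\<close> \<open>0 < W\<close> by (simp add: field_simps)
qed

lemma excess_weight_by_levels:
  assumes "A \<subseteq> E"
  shows "(\<Sum>i=2..k. (real i - 1) * wEs T w {\<tau>\<in>A. card (\<tau> \<inter> U) = i}) = excess_weight A U"
proof -
  have "finite A"
    using assms finite_E finite_subset by blast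
  moreover have "card (\<tau> \<inter> U) \<le> k" if "\<tau> \<in> A" for \<tau>
  proof -
    have "card (\<tau> \<inter> U) \<le> card \<tau>"
      using that assms finite_edge by (intro card_mono) auto
    then show ?thesis
      using that assms card_edge by auto
  qed
  ultimately show ?thesis
    using sum_by_levels[of A "\<lambda>\<tau>. card (\<tau> \<inter> U)" k "wE T w"]
    unfolding excess_weight_def wEs_def by (simp add: mult.commute)
qed

end

lemma solve_linear_self_bound:
  fixes x L t \<beta> :: real
  assumes "0 \<le> x" "L \<le> t" "0 \<le> t" "t \<le> 1" "0 \<le> \<beta>" "\<beta> \<le> 1/2"
    and "x \<le> L + \<beta> * (1 + x)"
  shows "(1 - t) * x \<le> t + 2 * \<beta>"
proof -
  have "(1 - \<beta>) * x \<le> t + \<beta>"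
    using assms by (simp add: algebra_simps)
  then have "(1 - \<beta>) * ((1 - t) * x) \<le> (1 - t) * (t + \<beta>)"
    using assms mult_left_mono[of "(1 - \<beta>) * x" "t + \<beta>" "1 - t"] by (simp add: ac_simps)
  also have "\<dots> \<le> (1 - \<beta>) * (t + 2 * \<beta>)"
  proof -
    have "(1 - \<beta>) * (t + 2 * \<beta>) - (1 - t) * (t + \<beta>) = \<beta> * (1 - 2 * \<beta>) + t\<^sup>2"
      by (simp add: algebra_simps power2_eq_square)
    moreover have "0 \<le> \<beta> * (1 - 2 * \<beta>)"
      using assms by simp
    ultimately show ?thesis
      by (smt (verit) zero_le_power2)
  qed
  finally show ?thesis
    using assms by (simp add: mult_le_cancel_left_pos)
qed

lemma solve_excess_self_bound:
  fixes s k \<mu> lam \<alpha> x :: real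
  assumes "2 \<le> s" "1 \<le> k" "0 < \<mu>" "0 \<le> lam" "0 \<le> \<alpha>" "\<alpha> \<le> 4 * \<mu>\<^sup>2 / (s ^ 3 * (s - 1)\<^sup>2)" "0 \<le> x"
    and "x \<le> lam * (k - 1) * (s - 1) / \<mu> + ((s - 1) / \<mu>)\<^sup>2 * \<alpha> * (1 + x)"
  shows "(1 - s * (s - 1) * (k - 1) / (2 * \<mu>) * lam) * x
           \<le> s * (s - 1) * (k - 1) / (2 * \<mu>) * lam + s ^ 3 * (s - 1)\<^sup>2 / (4 * \<mu>\<^sup>2) * \<alpha>"
proof -
  define t where "t = s * (s - 1) * (k - 1) / (2 * \<mu>) * lam"
  define \<beta> where "\<beta> = ((s - 1) / \<mu>)\<^sup>2 * \<alpha>"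
  have "0 \<le> t" "0 \<le> \<beta>"
    unfolding t_def \<beta>_def using assms by auto
  have "8 \<le> s ^ 3"
    using power_mono[of 2 s 3] assms(1) by simp
  have "\<beta> \<le> ((s - 1) / \<mu>)\<^sup>2 * (4 * \<mu>\<^sup>2 / (s ^ 3 * (s - 1)\<^sup>2))"
    unfolding \<beta>_def using assms(6) by (intro mult_left_mono) auto
  also have "\<dots> = 4 / s ^ 3"
    using assms(1,3) by (simp add: field_simps)
  also have "\<dots> \<le> 1 / 2"
    using \<open>8 \<le> s ^ 3\<close> assms(1) by (simp add: divide_le_eq)
  finally have "\<beta> \<le> 1 / 2" .
  have RHS: "s ^ 3 * (s - 1)\<^sup>2 / (4 * \<mu>\<^sup>2) * \<alpha> = s ^ 3 / 4 * \<beta>"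
    unfolding \<beta>_def by (simp add: power_divide)
  show ?thesis
  proof (cases "t \<le> 1")
    case True
    have "lam * (k - 1) * (s - 1) / \<mu> = 2 / s * t"
      unfolding t_def using assms(1,3) by (simp add: field_simps)
    also have "\<dots> \<le> t"
      using \<open>0 \<le> t\<close> assms(1) mult_right_mono[of 2 s t] by (simp add: field_simps)
    finally have "(1 - t) * x \<le> t + 2 * \<beta>"
      using solve_linear_self_bound[OF assms(7) _ \<open>0 \<le> t\<close> True \<open>0 \<le> \<beta>\<close> \<open>\<beta> \<le> 1 / 2\<close>] assms(8)
      unfolding \<beta>_def by blast
    moreover have "2 * \<beta> \<le> s ^ 3 / 4 * \<beta>"
      using \<open>8 \<le> s ^ 3\<close> \<open>0 \<le> \<beta>\<close> mult_right_mono[of 2 "s ^ 3 / 4" \<beta>] by simp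
    ultimately show ?thesis
      unfolding RHS t_def[symmetric] by simp
  next
    case False
    then have "(1 - t) * x \<le> 0"
      using assms(7) by (simp add: mult_nonpos_nonneg)
    moreover have "0 \<le> s ^ 3 / 4 * \<beta>"
      using \<open>0 \<le> \<beta>\<close> assms(1) by simp
    ultimately show ?thesis
      unfolding RHS t_def[symmetric] using \<open>0 \<le> t\<close> by linarith
  qed
qed

theorem lemma4p9:
  fixes s k K :: nat and V :: "'v set" and E :: "'v set set" and T :: "'v set set set"
    and w :: "'v set set \<Rightarrow> real" and lam \<mu> :: real and A :: "'v set set" and U :: "'v set"
  assumes X: "two_layer_system s k K V E T"
    and wpos: "\<forall>\<sigma>\<in>T. w \<sigma> > 0"
    and lam: "lam \<ge> 0"
    and exp: "is_expander lam V (ground_weight E T w)"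
    and A: "A \<subseteq> E" "A \<noteq> {}"
    and mu: "0 < \<mu>" "\<mu> < 1"
    and U: "U \<subseteq> V" "\<forall>v\<in>U. mu_large E T w \<mu> A v"
    and small: "wEs T w A / wEs T w E \<le> 4 * \<mu>^2 / (real s ^ 3 * (real s - 1)^2)"
  shows "real s * (real s - 1) * (real k - 1) / (2 * \<mu>) * lam
           + real s ^ 3 * (real s - 1)^2 / (4 * \<mu>^2) * (wEs T w A / wEs T w E)
         \<ge> (1 - real s * (real s - 1) * (real k - 1) / (2 * \<mu>) * lam) *
           (\<Sum>i=2..k. (real i - 1) * (wEs T w {\<tau>\<in>A. card (\<tau> \<inter> U) = i} / wEs T w A))"
proof -
  interpret weighted_two_layer_system s k K V E T w
    using X wpos by unfold_locales
  have levels: "(\<Sum>i=2..k. (real i - 1) * (wEs T w {\<tau>\<in>A. card (\<tau> \<inter> U) = i} / wEs T w A))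
      = excess_weight A U / wEs T w A"
    using excess_weight_by_levels[OF A(1), of U] by (simp add: sum_divide_distrib[symmetric])
  have "2 \<le> real s" "1 \<le> real k"
    using two_le_s A k_pos by auto
  moreover have "0 \<le> wEs T w A / wEs T w E" "0 \<le> excess_weight A U / wEs T w A"
    using wEs_nonneg excess_weight_nonneg by simp_all
  ultimately show ?thesis
    unfolding levels
    by (rule solve_excess_self_bound[OF _ _ mu(1) lam _ small _
          excess_ratio_self_bound[OF A U mu(1) lam exp]])
qed

end
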